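(* Let $\alpha\in(\pi/8,3\pi/8)$ with $\alpha/\pi\notin\mathbb{Q}$, $\beta=\alpha-\pi/2$, $\rho=0.01$, $A_1=\rho R(\alpha)$, $A_2=\rho R(\beta)$ where $R(\theta)=\begin{bmatrix}\cos\theta&-\sin\theta\\ \sin\theta&\cos\theta\end{bmatrix}$, and $c(x)=x_1^2+2x_2^2$ on $\mathbb{R}^2$. Let $J^\star$ be the optimal value function, $\tilde J^\star(\theta)=J^\star([\cos\theta,\sin\theta]^\top)$, $\Delta\tilde J^\star(\theta)=\tilde J^\star(\theta+\alpha)-\tilde J^\star(\theta+\beta)$, $\mu=\pi/4-\alpha$, $\delta=0.01$, and let $\nu\in(\mu-\delta,\mu+\delta)$ satisfy $\Delta\tilde J^\star(\nu)=0$. Let $I=[\nu+\beta,\nu+\alpha)$ and $T:I\to I$ be defined by $T(\theta)=\theta+\alpha$ if $\theta<\nu$ and $T(\theta)=\theta+\beta$ if $\theta\geq\nu$. Then for every $k\in\mathbb{N}$, $\tilde J^\star$ is not differentiable at $T^{-k}\nu$.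
   Context: $T$ is a bijection of $I$ (an interval exchange map), so $T^{-k}$ is well defined. For the switched linear system $\xi(t+1)=A_{\sigma(t)}\xi(t)$ with $\sigma:\mathbb{N}\to\{1,2\}$, $J^\star(x)=\inf_\sigma\sum_{t=0}^\infty c(\xi(t,x,\sigma))$ where $\xi(t,x,\sigma)$ is the solution with $\xi(0)=x$. *)

theory Defs
  imports "HOL-Analysis.Analysis"
begin

definition rot :: "real \<Rightarrow> real^2^2" where
  "rot \<theta> = vector [vector [cos \<theta>, - sin \<theta>], vector [sin \<theta>, cos \<theta>]]"

definition sysA :: "real \<Rightarrow> real \<Rightarrow> nat \<Rightarrow> real^2^2" where
  "sysA \<rho> \<alpha> i = (if i = 1 then \<rho> *\<^sub>R rot \<alpha> else \<rho> *\<^sub>R rot (\<alpha> - pi/2))"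

definition cost :: "real^2 \<Rightarrow> real" where
  "cost x = (x$1)^2 + 2 * (x$2)^2"

primrec traj :: "(nat \<Rightarrow> real^2^2) \<Rightarrow> (nat \<Rightarrow> nat) \<Rightarrow> real^2 \<Rightarrow> nat \<Rightarrow> real^2" where
  "traj A \<sigma> x 0 = x"
| "traj A \<sigma> x (Suc t) = A (\<sigma> t) *v traj A \<sigma> x t"

definition switching_signals :: "(nat \<Rightarrow> nat) set" where
  "switching_signals = {\<sigma>. \<forall>t. \<sigma> t \<in> {1,2}}"

definition Jstar :: "real \<Rightarrow> real \<Rightarrow> real^2 \<Rightarrow> real" where
  "Jstar \<rho> \<alpha> x = (INF \<sigma>\<in>switching_signals. (\<Sum>t. cost (traj (sysA \<rho> \<alpha>) \<sigma> x t)))"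

definition Jtilde :: "real \<Rightarrow> real \<Rightarrow> real \<Rightarrow> real" where
  "Jtilde \<rho> \<alpha> \<theta> = Jstar \<rho> \<alpha> (vector [cos \<theta>, sin \<theta>])"

definition DeltaJtilde :: "real \<Rightarrow> real \<Rightarrow> real \<Rightarrow> real" where
  "DeltaJtilde \<rho> \<alpha> \<theta> = Jtilde \<rho> \<alpha> (\<theta> + \<alpha>) - Jtilde \<rho> \<alpha> (\<theta> + (\<alpha> - pi/2))"

definition Tmap :: "real \<Rightarrow> real \<Rightarrow> real \<Rightarrow> real" where
  "Tmap \<alpha> \<nu> \<theta> = (if \<theta> < \<nu> then \<theta> + \<alpha> else \<theta> + (\<alpha> - pi/2))"

definition Iint :: "real \<Rightarrow> real \<Rightarrow> real set" where
  "Iint \<alpha> \<nu> = {\<nu> + (\<alpha> - pi/2) ..< \<nu> + \<alpha>}"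

definition Tinv_iter :: "real \<Rightarrow> real \<Rightarrow> nat \<Rightarrow> real" where
  "Tinv_iter \<alpha> \<nu> k = (inv_into (Iint \<alpha> \<nu>) (Tmap \<alpha> \<nu>) ^^ k) \<nu>"

end

theory Submission
  imports Defs
begin

(* On the unit circle the cost of a trajectory depends only on its angle, so J~* is the infimum over
   switching signals of sum_t rho^(2t) (1 + sin^2 (theta + accumulated rotation)).  Such an infimum
   satisfies the Bellman equation J~*(theta) = 1 + sin^2 theta + rho^2 min (J~*(theta + alpha), J~*(theta + beta)),
   is Lipschitz and semiconcave.  Near nu, the gap J~*(theta + alpha) - J~*(theta + beta) is dominated by the
   sin^2 terms and changes sign at nu with nonzero slope, so the minimum in the Bellman equation has a
   concave kink at nu, which semiconcavity of J~* cannot compensate: J~* is not differentiable at nu.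
   Away from nu the minimum is attained by one branch only, so the Bellman equation transports
   differentiability of J~* from theta to T theta; running this backwards along the orbit of nu, which
   by irrationality of alpha/pi never returns to nu, proves the claim. *)

lemma INF_lipschitz:
  fixes f :: "'i \<Rightarrow> real \<Rightarrow> real"
  assumes "S \<noteq> {}" "\<And>x. bdd_below ((\<lambda>i. f i x) ` S)"
    and "\<And>i x y. i \<in> S \<Longrightarrow> f i x - f i y \<le> L * \<bar>x - y\<bar>"
  shows "\<bar>(INF i\<in>S. f i x) - (INF i\<in>S. f i y)\<bar> \<le> L * \<bar>x - y\<bar>"
proof -
  have "(INF i\<in>S. f i x) - (INF i\<in>S. f i y) \<le> L * \<bar>x - y\<bar>" for x y
  proof -
    have "(INF i\<in>S. f i x) - L * \<bar>x - y\<bar> \<le> f i y" if "i \<in> S" for i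
      using cINF_lower[OF assms(2) that, of x] assms(3)[OF that, of x y] by linarith
    then have "(INF i\<in>S. f i x) - L * \<bar>x - y\<bar> \<le> (INF i\<in>S. f i y)"
      using assms(1) by (intro cINF_greatest) auto
    then show ?thesis by linarith
  qed
  from this[of x y] this[of y x] show ?thesis
    by (simp add: abs_minus_commute)
qed

lemma INF_second_difference_le:
  fixes f :: "'i \<Rightarrow> real \<Rightarrow> real"
  assumes "S \<noteq> {}" "\<And>x. bdd_below ((\<lambda>i. f i x) ` S)"
    and "\<And>i. i \<in> S \<Longrightarrow> f i (x + h) + f i (x - h) - 2 * f i x \<le> C"
  shows "(INF i\<in>S. f i (x + h)) + (INF i\<in>S. f i (x - h)) - 2 * (INF i\<in>S. f i x) \<le> C"
proof -
  have "((INF i\<in>S. f i (x + h)) + (INF i\<in>S. f i (x - h)) - C) / 2 \<le> f i x" if "i \<in> S" for i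
    using cINF_lower[OF assms(2) that, of "x + h"] cINF_lower[OF assms(2) that, of "x - h"]
      assms(3)[OF that] by (simp add: field_simps)
  then have "((INF i\<in>S. f i (x + h)) + (INF i\<in>S. f i (x - h)) - C) / 2 \<le> (INF i\<in>S. f i x)"
    using assms(1) by (intro cINF_greatest) auto
  then show ?thesis by (simp add: field_simps)
qed

lemma sums_geometric_weighted_le:
  fixes r :: real
  assumes "0 \<le> r" "r < 1" "(\<lambda>t. r ^ t * a t) sums s" "\<And>t. a t \<le> B"
  shows "s \<le> B / (1 - r)"
proof (rule sums_le)
  show "(\<lambda>t. B * r ^ t) sums (B / (1 - r))"
    using sums_mult[OF geometric_sums, of r B] assms(1,2) by simp
  show "r ^ t * a t \<le> B * r ^ t" for t
    using assms(1,4) by (simp add: mult.commute mult_right_mono)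
qed (use assms(3) in simp_all)

lemma differentiable_at_cong_nhds:
  fixes f g :: "real \<Rightarrow> real"
  assumes "eventually (\<lambda>y. f y = g y) (nhds x)"
  shows "f differentiable (at x) \<longleftrightarrow> g differentiable (at x)"
  using DERIV_cong_ev[OF refl assms refl] unfolding real_differentiable_def by blast

lemma differentiable_at_shift_iff:
  fixes f :: "real \<Rightarrow> real"
  shows "f differentiable (at (x + a)) \<longleftrightarrow> (\<lambda>y. f (y + a)) differentiable (at x)"
  unfolding real_differentiable_def DERIV_shift ..

lemma differentiable_at_add_scaled_iff:
  fixes f g :: "real \<Rightarrow> real"
  assumes "c \<noteq> 0" "g differentiable (at x)"
  shows "(\<lambda>y. g y + c * f y) differentiable (at x) \<longleftrightarrow> f differentiable (at x)"
proof
  assume "(\<lambda>y. g y + c * f y) differentiable (at x)"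
  then have "(\<lambda>y. ((g y + c * f y) - g y) / c) differentiable (at x)"
    using assms by (intro differentiable_divide differentiable_diff differentiable_const)
  then show "f differentiable (at x)"
    using assms(1) by simp
qed (use assms(2) in \<open>intro differentiable_add differentiable_mult differentiable_const\<close>)

lemma not_differentiable_at_if_second_difference_le:
  fixes f :: "real \<Rightarrow> real"
  assumes "0 < c"
    and "eventually (\<lambda>h. f (x + h) + f (x - h) - 2 * f x \<le> C * h\<^sup>2 - c * h) (at_right 0)"
  shows "\<not> f differentiable (at x)"
proof
  assume "f differentiable (at x)"
  then obtain D where "DERIV f (0 + x) :> D"
    unfolding real_differentiable_def by auto
  then have right: "DERIV (\<lambda>h. f (h + x)) 0 :> D" and "DERIV (\<lambda>h. f (h + x)) (- 0) :> D"
    by (simp_all only: DERIV_shift minus_zero)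
  then have left: "DERIV (\<lambda>h. f (- h + x)) 0 :> - D"
    by (simp only: DERIV_mirror)
  have "DERIV (\<lambda>h. f (h + x) + f (- h + x)) 0 :> D + - D"
    by (rule DERIV_add[OF right left])
  then have "((\<lambda>h. (f (x + h) + f (x - h) - 2 * f x) / h) \<longlongrightarrow> 0) (at 0)"
    unfolding DERIV_def by (simp add: algebra_simps)
  then have quotient: "((\<lambda>h. (f (x + h) + f (x - h) - 2 * f x) / h) \<longlongrightarrow> 0) (at_right 0)"
    by (rule tendsto_within_subset) simp
  have bound: "((\<lambda>h. C * h - c) \<longlongrightarrow> C * 0 - c) (at_right 0)"
    by (intro tendsto_intros)
  have "eventually (\<lambda>h. (f (x + h) + f (x - h) - 2 * f x) / h \<le> C * h - c) (at_right 0)"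
    using assms(2) eventually_at_right_less[of 0]
  proof eventually_elim
    case (elim h)
    then have "(f (x + h) + f (x - h) - 2 * f x) / h \<le> (C * h\<^sup>2 - c * h) / h"
      by (intro divide_right_mono) auto
    also have "\<dots> = C * h - c"
      using elim by (simp add: power2_eq_square field_simps)
    finally show ?case .
  qed
  then have "0 \<le> C * 0 - c"
    using tendsto_le[OF trivial_limit_at_right_real bound quotient] by blast
  with assms(1) show False by simp
qed

lemma cos_ge_one_fifth:
  fixes y :: real
  assumes "\<bar>y\<bar> \<le> 5/4"
  shows "1/5 \<le> cos y"
proof -
  have "cos y = 1 - 2 * sin (y/2) ^ 2"
    using cos_double_sin[of "y/2"] by simp
  moreover have "sin (y/2) ^ 2 \<le> (y/2)\<^sup>2"
    using abs_sin_x_le_abs_x[of "y/2"] abs_le_square_iff by blast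
  moreover have "y\<^sup>2 \<le> (5/4)\<^sup>2"
    using assms abs_le_square_iff[of y "5/4"] by simp
  ultimately show ?thesis
    by (simp add: power_divide)
qed

lemma x_mult_sin_ge:
  fixes x :: real
  assumes "\<bar>x\<bar> \<le> 5/4"
  shows "7/10 * x\<^sup>2 \<le> x * sin x"
proof -
  have "\<bar>sin x - (\<Sum>m<3. sin_coeff m * x ^ m)\<bar> \<le> inverse (fact 3) * \<bar>x\<bar> ^ 3"
    by (rule Maclaurin_sin_bound)
  moreover have "(\<Sum>m<3. sin_coeff m * x ^ m) = x"
    by (simp add: numeral_3_eq_3 sin_coeff_def)
  moreover have "fact 3 = (6::real)"
    by (simp add: numeral_3_eq_3)
  ultimately have taylor: "\<bar>sin x - x\<bar> \<le> \<bar>x\<bar> ^ 3 / 6"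
    by (simp add: inverse_eq_divide)
  have "\<bar>x * sin x - x\<^sup>2\<bar> = \<bar>x\<bar> * \<bar>sin x - x\<bar>"
    by (simp add: power2_eq_square right_diff_distrib flip: abs_mult)
  also have "\<dots> \<le> \<bar>x\<bar> * (\<bar>x\<bar> ^ 3 / 6)"
    using taylor by (intro mult_left_mono) auto
  also have "\<dots> = x\<^sup>2 * x\<^sup>2 / 6"
    by (simp add: power2_eq_square power3_eq_cube abs_mult_self_eq flip: abs_mult)
  also have "\<dots> \<le> (5/4)\<^sup>2 * x\<^sup>2 / 6"
    using assms abs_le_square_iff[of x "5/4"] by (intro divide_right_mono mult_right_mono) auto
  finally have "\<bar>x * sin x - x\<^sup>2\<bar> \<le> 25/96 * x\<^sup>2"
    by (simp add: power2_eq_square)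
  then show ?thesis
    using zero_le_power2[of x] abs_ge_minus_self[of "x * sin x - x\<^sup>2"] by linarith
qed

lemma sin_squared_diff: "sin (x::real) ^ 2 - sin y ^ 2 = sin (x + y) * sin (x - y)"
proof -
  have "sin (x + y) * sin (x - y) = sin x ^ 2 * cos y ^ 2 - cos x ^ 2 * sin y ^ 2"
    by (simp add: sin_add sin_diff power2_eq_square algebra_simps)
  also have "\<dots> = sin x ^ 2 - sin y ^ 2"
    by (simp add: cos_squared_eq algebra_simps)
  finally show ?thesis ..
qed

lemma sin_squared_diff_le: "sin (x::real) ^ 2 - sin y ^ 2 \<le> \<bar>x - y\<bar>"
proof -
  have "sin x ^ 2 - sin y ^ 2 \<le> \<bar>sin (x + y)\<bar> * \<bar>sin (x - y)\<bar>"
    unfolding sin_squared_diff abs_mult[symmetric] by (rule abs_ge_self)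
  also have "\<dots> \<le> 1 * \<bar>x - y\<bar>"
    by (intro mult_mono abs_sin_le_one abs_sin_x_le_abs_x) auto
  finally show ?thesis
    by simp
qed

lemma sin_squared_second_difference_le:
  "sin ((a::real) + h) ^ 2 + sin (a - h) ^ 2 - 2 * sin a ^ 2 \<le> 2 * h\<^sup>2"
proof -
  have "sin (a + h) ^ 2 + sin (a - h) ^ 2 = 2 * sin a ^ 2 * cos h ^ 2 + 2 * cos a ^ 2 * sin h ^ 2"
    by (simp add: sin_add sin_diff power2_eq_square algebra_simps)
  also have "\<dots> = 2 * sin a ^ 2 + 2 * (cos a ^ 2 - sin a ^ 2) * sin h ^ 2"
    by (simp add: cos_squared_eq algebra_simps)
  finally have "sin (a + h) ^ 2 + sin (a - h) ^ 2 - 2 * sin a ^ 2 = 2 * cos (2 * a) * sin h ^ 2"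
    by (simp add: cos_double)
  also have "\<dots> \<le> 2 * 1 * sin h ^ 2"
    by (intro mult_right_mono mult_left_mono) auto
  also have "\<dots> \<le> 2 * h\<^sup>2"
    using abs_sin_x_le_abs_x[of h] by (simp add: abs_le_square_iff)
  finally show ?thesis .
qed

lemma sin_squared_minus_quarter_turn: "sin (z::real) ^ 2 - sin (z - pi/2) ^ 2 = - cos (2 * z)"
proof -
  have "sin (z - pi/2) = - cos z"
    by (simp add: sin_diff)
  then show ?thesis
    by (simp add: cos_double)
qed

lemma sin_squared_gap_diff:
  "(sin (\<theta> + x + \<alpha>) ^ 2 - sin (\<theta> + x + (\<alpha> - pi/2)) ^ 2) - (sin (\<theta> + \<alpha>) ^ 2 - sin (\<theta> + (\<alpha> - pi/2)) ^ 2)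
     = 2 * sin (2 * (\<theta> + \<alpha>) + x) * sin x"
proof -
  have "(sin (\<theta> + x + \<alpha>) ^ 2 - sin (\<theta> + x + (\<alpha> - pi/2)) ^ 2) - (sin (\<theta> + \<alpha>) ^ 2 - sin (\<theta> + (\<alpha> - pi/2)) ^ 2)
      = cos (2 * (\<theta> + \<alpha>)) - cos (2 * (\<theta> + \<alpha>) + 2 * x)"
    using sin_squared_minus_quarter_turn[of "\<theta> + x + \<alpha>"] sin_squared_minus_quarter_turn[of "\<theta> + \<alpha>"]
    by (simp add: algebra_simps)
  also have "\<dots> = 2 * sin (2 * (\<theta> + \<alpha>) + x) * sin x"
  proof -
    have "(2 * (\<theta> + \<alpha>) + (2 * (\<theta> + \<alpha>) + 2 * x)) / 2 = 2 * (\<theta> + \<alpha>) + x"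
      and "(2 * (\<theta> + \<alpha>) + 2 * x - 2 * (\<theta> + \<alpha>)) / 2 = x"
      by simp_all
    with cos_diff_cos[of "2 * (\<theta> + \<alpha>)" "2 * (\<theta> + \<alpha>) + 2 * x"] show ?thesis
      by (simp only:)
  qed
  finally show ?thesis .
qed

(* As in sysA, every mode index other than 1 acts as mode 2. *)
definition mode_angle :: "real \<Rightarrow> nat \<Rightarrow> real" where
  "mode_angle \<alpha> i = (if i = 1 then \<alpha> else \<alpha> - pi/2)"

definition switched_angle :: "real \<Rightarrow> (nat \<Rightarrow> nat) \<Rightarrow> nat \<Rightarrow> real" where
  "switched_angle \<alpha> \<sigma> t = (\<Sum>i<t. mode_angle \<alpha> (\<sigma> i))"

definition angle_cost :: "real \<Rightarrow> real \<Rightarrow> (nat \<Rightarrow> nat) \<Rightarrow> real \<Rightarrow> real" where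
  "angle_cost r \<alpha> \<sigma> \<theta> = (\<Sum>t. r ^ t * (1 + sin (\<theta> + switched_angle \<alpha> \<sigma> t) ^ 2))"

definition angle_value :: "real \<Rightarrow> real \<Rightarrow> real \<Rightarrow> real" where
  "angle_value r \<alpha> \<theta> = (INF \<sigma>\<in>switching_signals. angle_cost r \<alpha> \<sigma> \<theta>)"

lemma rot_mult_unit_vector:
  "rot \<phi> *v vector [cos a, sin a] = (vector [cos (a + \<phi>), sin (a + \<phi>)] :: real^2)"
  unfolding rot_def
  by (simp add: vec_eq_iff matrix_vector_mult_def forall_2 sum_2 cos_add sin_add algebra_simps)

lemma sysA_mult_unit_vector:
  "sysA \<rho> \<alpha> i *v vector [cos a, sin a]
     = \<rho> *\<^sub>R (vector [cos (a + mode_angle \<alpha> i), sin (a + mode_angle \<alpha> i)] :: real^2)"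
  unfolding sysA_def mode_angle_def
  by (simp add: scaleR_matrix_vector_assoc[symmetric] rot_mult_unit_vector)

lemma traj_unit_vector:
  "traj (sysA \<rho> \<alpha>) \<sigma> (vector [cos \<theta>, sin \<theta>]) t
     = \<rho> ^ t *\<^sub>R (vector [cos (\<theta> + switched_angle \<alpha> \<sigma> t), sin (\<theta> + switched_angle \<alpha> \<sigma> t)] :: real^2)"
  unfolding switched_angle_def
  by (induction t) (simp_all add: matrix_vector_mult_scaleR sysA_mult_unit_vector add.assoc)

lemma cost_scaled_unit_vector: "cost (c *\<^sub>R (vector [cos b, sin b] :: real^2)) = c\<^sup>2 * (1 + sin b ^ 2)"
proof -
  have "c\<^sup>2 * (cos b)\<^sup>2 + c\<^sup>2 * (sin b)\<^sup>2 = c\<^sup>2"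
    by (metis distrib_left sin_cos_squared_add2 mult_1_right)
  then show ?thesis
    unfolding cost_def by (simp add: power_mult_distrib algebra_simps)
qed

lemma Jtilde_eq_angle_value: "Jtilde \<rho> \<alpha> = angle_value (\<rho>\<^sup>2) \<alpha>"
proof
  fix \<theta>
  have "(\<rho> ^ t)\<^sup>2 = (\<rho>\<^sup>2) ^ t" for t :: nat
    by (simp add: power_mult[symmetric] mult.commute)
  then show "Jtilde \<rho> \<alpha> \<theta> = angle_value (\<rho>\<^sup>2) \<alpha> \<theta>"
    unfolding Jtilde_def Jstar_def angle_value_def angle_cost_def
    by (simp add: traj_unit_vector cost_scaled_unit_vector)
qed

lemma switched_angle_Suc:
  "switched_angle \<alpha> \<sigma> (Suc t) = mode_angle \<alpha> (\<sigma> 0) + switched_angle \<alpha> (\<sigma> \<circ> Suc) t"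
  unfolding switched_angle_def sum.lessThan_Suc_shift by simp

lemma switching_signals_nonempty: "switching_signals \<noteq> {}"
  by (auto simp: switching_signals_def)

lemma switching_signals_Cons:
  "i \<in> {1, 2} \<Longrightarrow> \<tau> \<in> switching_signals \<Longrightarrow> case_nat i \<tau> \<in> switching_signals"
  by (auto simp: switching_signals_def split: nat.split)

lemma switching_signals_tl: "\<sigma> \<in> switching_signals \<Longrightarrow> \<sigma> \<circ> Suc \<in> switching_signals"
  by (simp add: switching_signals_def)

lemma angle_cost_sums:
  assumes "0 \<le> r" "r < 1"
  shows "(\<lambda>t. r ^ t * (1 + sin (\<theta> + switched_angle \<alpha> \<sigma> t) ^ 2)) sums angle_cost r \<alpha> \<sigma> \<theta>"
  unfolding angle_cost_def
proof (rule summable_sums, rule summable_comparison_test')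
  show "summable (\<lambda>t. 2 * r ^ t)"
    using assms by (intro summable_mult summable_geometric) simp
  show "norm (r ^ t * (1 + sin (\<theta> + switched_angle \<alpha> \<sigma> t) ^ 2)) \<le> 2 * r ^ t" for t
    using assms(1) abs_square_le_1[of "sin (\<theta> + switched_angle \<alpha> \<sigma> t)"]
    by (simp add: abs_mult mult.commute[of 2] mult_left_mono)
qed

lemma angle_cost_nonneg:
  assumes "0 \<le> r" "r < 1"
  shows "0 \<le> angle_cost r \<alpha> \<sigma> \<theta>"
  using assms by (intro sums_le[OF _ sums_zero angle_cost_sums[OF assms]]) simp

lemma angle_cost_lipschitz:
  assumes "0 \<le> r" "r < 1"
  shows "angle_cost r \<alpha> \<sigma> x - angle_cost r \<alpha> \<sigma> y \<le> \<bar>x - y\<bar> / (1 - r)"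
proof (rule sums_geometric_weighted_le[OF assms])
  let ?s = "switched_angle \<alpha> \<sigma>"
  show "(\<lambda>t. r ^ t * (sin (x + ?s t) ^ 2 - sin (y + ?s t) ^ 2))
          sums (angle_cost r \<alpha> \<sigma> x - angle_cost r \<alpha> \<sigma> y)"
    using sums_diff[OF angle_cost_sums[OF assms, of x \<alpha> \<sigma>] angle_cost_sums[OF assms, of y \<alpha> \<sigma>]]
    by (simp add: algebra_simps)
  show "sin (x + ?s t) ^ 2 - sin (y + ?s t) ^ 2 \<le> \<bar>x - y\<bar>" for t
    using sin_squared_diff_le[of "x + ?s t" "y + ?s t"] by simp
qed

lemma angle_cost_second_difference_le:
  assumes "0 \<le> r" "r < 1"
  shows "angle_cost r \<alpha> \<sigma> (x + h) + angle_cost r \<alpha> \<sigma> (x - h) - 2 * angle_cost r \<alpha> \<sigma> x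
           \<le> 2 * h\<^sup>2 / (1 - r)"
proof (rule sums_geometric_weighted_le[OF assms])
  let ?s = "switched_angle \<alpha> \<sigma>"
  show "(\<lambda>t. r ^ t * (sin (x + h + ?s t) ^ 2 + sin (x - h + ?s t) ^ 2 - 2 * sin (x + ?s t) ^ 2))
          sums (angle_cost r \<alpha> \<sigma> (x + h) + angle_cost r \<alpha> \<sigma> (x - h) - 2 * angle_cost r \<alpha> \<sigma> x)"
    using sums_diff[OF sums_add[OF angle_cost_sums[OF assms, of "x + h" \<alpha> \<sigma>]
        angle_cost_sums[OF assms, of "x - h" \<alpha> \<sigma>]] sums_mult[OF angle_cost_sums[OF assms, of x \<alpha> \<sigma>], of 2]]
    by (simp add: algebra_simps)
  show "sin (x + h + ?s t) ^ 2 + sin (x - h + ?s t) ^ 2 - 2 * sin (x + ?s t) ^ 2 \<le> 2 * h\<^sup>2" for t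
    using sin_squared_second_difference_le[of "x + ?s t" h] by (simp add: algebra_simps)
qed

lemma angle_cost_unfold:
  assumes "0 \<le> r" "r < 1"
  shows "angle_cost r \<alpha> \<sigma> \<theta>
           = 1 + sin \<theta> ^ 2 + r * angle_cost r \<alpha> (\<sigma> \<circ> Suc) (\<theta> + mode_angle \<alpha> (\<sigma> 0))"
proof -
  let ?g = "\<lambda>t. r ^ t * (1 + sin (\<theta> + switched_angle \<alpha> \<sigma> t) ^ 2)"
  have "(\<lambda>t. ?g (Suc t)) sums (r * angle_cost r \<alpha> (\<sigma> \<circ> Suc) (\<theta> + mode_angle \<alpha> (\<sigma> 0)))"
    using sums_mult[OF angle_cost_sums[OF assms, of "\<theta> + mode_angle \<alpha> (\<sigma> 0)" \<alpha> "\<sigma> \<circ> Suc"], of r]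
    by (simp add: switched_angle_Suc add.assoc mult.assoc)
  then have "?g sums (r * angle_cost r \<alpha> (\<sigma> \<circ> Suc) (\<theta> + mode_angle \<alpha> (\<sigma> 0)) + ?g 0)"
    by (rule sums_Suc_iff[THEN iffD1])
  then show ?thesis
    using sums_unique2[OF angle_cost_sums[OF assms]] by (simp add: switched_angle_def)
qed

context
  fixes r :: real
  assumes r_nonneg: "0 \<le> r" and r_less_1: "r < 1"
begin

lemma bdd_below_angle_cost: "bdd_below ((\<lambda>\<sigma>. angle_cost r \<alpha> \<sigma> \<theta>) ` S)"
  using angle_cost_nonneg[OF r_nonneg r_less_1] by (intro bdd_belowI[of _ 0]) auto

lemma angle_value_le: "\<sigma> \<in> switching_signals \<Longrightarrow> angle_value r \<alpha> \<theta> \<le> angle_cost r \<alpha> \<sigma> \<theta>"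
  unfolding angle_value_def by (rule cINF_lower[OF bdd_below_angle_cost])

lemma angle_value_greatest:
  "(\<And>\<sigma>. \<sigma> \<in> switching_signals \<Longrightarrow> c \<le> angle_cost r \<alpha> \<sigma> \<theta>) \<Longrightarrow> c \<le> angle_value r \<alpha> \<theta>"
  unfolding angle_value_def using switching_signals_nonempty by (rule cINF_greatest)

lemma angle_value_lipschitz: "\<bar>angle_value r \<alpha> x - angle_value r \<alpha> y\<bar> \<le> \<bar>x - y\<bar> / (1 - r)"
  using INF_lipschitz[where f = "\<lambda>\<sigma>. angle_cost r \<alpha> \<sigma>" and L = "1 / (1 - r)",
      OF switching_signals_nonempty bdd_below_angle_cost]
    angle_cost_lipschitz[OF r_nonneg r_less_1]
  unfolding angle_value_def by simp

lemma angle_value_second_difference_le: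
  "angle_value r \<alpha> (x + h) + angle_value r \<alpha> (x - h) - 2 * angle_value r \<alpha> x \<le> 2 * h\<^sup>2 / (1 - r)"
  unfolding angle_value_def
  by (intro INF_second_difference_le[OF switching_signals_nonempty bdd_below_angle_cost]
      angle_cost_second_difference_le r_nonneg r_less_1)

end

lemma angle_value_le_step:
  assumes "0 < r" "r < 1" "i \<in> {1, 2}"
  shows "angle_value r \<alpha> \<theta> \<le> 1 + sin \<theta> ^ 2 + r * angle_value r \<alpha> (\<theta> + mode_angle \<alpha> i)"
proof -
  have "(angle_value r \<alpha> \<theta> - 1 - sin \<theta> ^ 2) / r \<le> angle_value r \<alpha> (\<theta> + mode_angle \<alpha> i)"
  proof (rule angle_value_greatest)
    fix \<tau> assume "\<tau> \<in> switching_signals"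
    then have "angle_value r \<alpha> \<theta> \<le> angle_cost r \<alpha> (case_nat i \<tau>) \<theta>"
      using assms by (intro angle_value_le switching_signals_Cons) auto
    also have "\<dots> = 1 + sin \<theta> ^ 2 + r * angle_cost r \<alpha> \<tau> (\<theta> + mode_angle \<alpha> i)"
      using assms by (subst angle_cost_unfold) (auto simp: comp_def)
    finally show "(angle_value r \<alpha> \<theta> - 1 - sin \<theta> ^ 2) / r \<le> angle_cost r \<alpha> \<tau> (\<theta> + mode_angle \<alpha> i)"
      using assms(1) by (simp add: field_simps)
  qed (use assms in auto)
  then show ?thesis
    using assms(1) by (simp add: field_simps)
qed

lemma angle_value_bellman:
  assumes "0 < r" "r < 1"
  shows "angle_value r \<alpha> \<theta>
           = 1 + sin \<theta> ^ 2 + r * min (angle_value r \<alpha> (\<theta> + \<alpha>)) (angle_value r \<alpha> (\<theta> + (\<alpha> - pi/2)))"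
    (is "_ = 1 + sin \<theta> ^ 2 + r * ?m")
proof (rule antisym)
  show "angle_value r \<alpha> \<theta> \<le> 1 + sin \<theta> ^ 2 + r * ?m"
    using angle_value_le_step[OF assms, of 1 \<alpha> \<theta>] angle_value_le_step[OF assms, of 2 \<alpha> \<theta>]
    by (simp add: mode_angle_def min_def)
  show "1 + sin \<theta> ^ 2 + r * ?m \<le> angle_value r \<alpha> \<theta>"
  proof (rule angle_value_greatest)
    fix \<sigma> assume \<sigma>: "\<sigma> \<in> switching_signals"
    have "?m \<le> angle_value r \<alpha> (\<theta> + mode_angle \<alpha> (\<sigma> 0))"
      by (simp add: mode_angle_def)
    also have "\<dots> \<le> angle_cost r \<alpha> (\<sigma> \<circ> Suc) (\<theta> + mode_angle \<alpha> (\<sigma> 0))"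
      using assms by (intro angle_value_le switching_signals_tl \<sigma>) auto
    finally show "1 + sin \<theta> ^ 2 + r * ?m \<le> angle_cost r \<alpha> \<sigma> \<theta>"
      using assms angle_cost_unfold[of r \<alpha> \<sigma> \<theta>] by (simp add: mult_left_mono)
  qed (use assms in auto)
qed

lemma Iint_subset_image_Tmap:
  assumes "0 < \<alpha>" "\<alpha> < pi/2"
  shows "Iint \<alpha> \<nu> \<subseteq> Tmap \<alpha> \<nu> ` Iint \<alpha> \<nu>"
proof
  fix y assume y: "y \<in> Iint \<alpha> \<nu>"
  show "y \<in> Tmap \<alpha> \<nu> ` Iint \<alpha> \<nu>"
  proof (cases "y < \<nu> + \<alpha> + (\<alpha> - pi/2)")
    case True
    then have "y - (\<alpha> - pi/2) \<in> Iint \<alpha> \<nu>" "Tmap \<alpha> \<nu> (y - (\<alpha> - pi/2)) = y"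
      using assms y by (auto simp: Iint_def Tmap_def)
    then show ?thesis by (metis image_eqI)
  next
    case False
    then have "y - \<alpha> \<in> Iint \<alpha> \<nu>" "Tmap \<alpha> \<nu> (y - \<alpha>) = y"
      using assms y by (auto simp: Iint_def Tmap_def)
    then show ?thesis by (metis image_eqI)
  qed
qed

lemma Tinv_iter_Suc: "Tinv_iter \<alpha> \<nu> (Suc k) = inv_into (Iint \<alpha> \<nu>) (Tmap \<alpha> \<nu>) (Tinv_iter \<alpha> \<nu> k)"
  by (simp add: Tinv_iter_def)

context
  fixes \<alpha> \<nu> :: real
  assumes alpha_pos: "0 < \<alpha>" and alpha_less: "\<alpha> < pi/2"
begin

lemma Tinv_iter_in_Iint: "Tinv_iter \<alpha> \<nu> k \<in> Iint \<alpha> \<nu>"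
proof (induction k)
  case 0
  then show ?case
    using alpha_pos alpha_less by (simp add: Tinv_iter_def Iint_def)
next
  case (Suc k)
  then show ?case
    unfolding Tinv_iter_Suc
    by (intro inv_into_into subsetD[OF Iint_subset_image_Tmap[OF alpha_pos alpha_less]])
qed

lemma Tmap_Tinv_iter_Suc: "Tmap \<alpha> \<nu> (Tinv_iter \<alpha> \<nu> (Suc k)) = Tinv_iter \<alpha> \<nu> k"
  unfolding Tinv_iter_Suc
  by (intro f_inv_into_f subsetD[OF Iint_subset_image_Tmap[OF alpha_pos alpha_less] Tinv_iter_in_Iint])

lemma Tinv_iter_eq: "\<exists>n::int. Tinv_iter \<alpha> \<nu> k = \<nu> - real k * \<alpha> + of_int n * (pi/2)"
proof (induction k)
  case 0
  then show ?case
    by (auto simp: Tinv_iter_def)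
next
  case (Suc k)
  then obtain n :: int where n: "Tinv_iter \<alpha> \<nu> k = \<nu> - real k * \<alpha> + of_int n * (pi/2)" ..
  let ?q = "Tinv_iter \<alpha> \<nu> (Suc k)"
  have "?q + \<alpha> = Tinv_iter \<alpha> \<nu> k \<or> ?q + (\<alpha> - pi/2) = Tinv_iter \<alpha> \<nu> k"
    using Tmap_Tinv_iter_Suc[of k] by (auto simp: Tmap_def split: if_splits)
  then have "?q = \<nu> - real (Suc k) * \<alpha> + of_int n * (pi/2)
           \<or> ?q = \<nu> - real (Suc k) * \<alpha> + of_int (n + 1) * (pi/2)"
    using n by (auto simp: algebra_simps)
  then show ?case by blast
qed

lemma Tinv_iter_Suc_neq:
  assumes "\<alpha> / pi \<notin> \<rat>"
  shows "Tinv_iter \<alpha> \<nu> (Suc k) \<noteq> \<nu>"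
proof
  assume "Tinv_iter \<alpha> \<nu> (Suc k) = \<nu>"
  with Tinv_iter_eq[of "Suc k"] obtain n :: int where "\<nu> = \<nu> - real (Suc k) * \<alpha> + of_int n * (pi/2)"
    by auto
  then have "real (Suc k) * \<alpha> = of_int n * (pi/2)"
    by linarith
  then have "\<alpha> / pi = of_int n / (2 * real (Suc k))"
    by (simp add: field_simps del: of_nat_Suc)
  also have "\<dots> \<in> \<rat>"
    by (intro Rats_divide Rats_mult Rats_of_int Rats_of_nat Rats_number_of)
  finally show False
    using assms by contradiction
qed

end

locale balanced_angle =
  fixes \<alpha> \<nu> :: real
  assumes alpha_gt: "pi/8 < \<alpha>" and alpha_lt: "\<alpha> < 3*pi/8"
    and nu_gt: "pi/4 - \<alpha> - 1/100 < \<nu>" and nu_lt: "\<nu> < pi/4 - \<alpha> + 1/100"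
    and balanced: "angle_value (1/10000) \<alpha> (\<nu> + \<alpha>) = angle_value (1/10000) \<alpha> (\<nu> + (\<alpha> - pi/2))"
begin

abbreviation V :: "real \<Rightarrow> real" where
  "V \<equiv> angle_value (1/10000) \<alpha>"

definition next_value :: "real \<Rightarrow> real" where
  "next_value \<theta> = min (V (\<theta> + \<alpha>)) (V (\<theta> + (\<alpha> - pi/2)))"

lemma alpha_bounds: "0 < \<alpha>" "\<alpha> < pi/2" "\<alpha> < 6/5" "- 6/5 < \<alpha> - pi/2"
  using alpha_gt alpha_lt pi_approx by auto

lemma V_bellman: "V \<theta> = 1 + sin \<theta> ^ 2 + 1/10000 * next_value \<theta>"
  unfolding next_value_def by (rule angle_value_bellman) auto

lemma next_value_lipschitz: "\<bar>next_value x - next_value y\<bar> \<le> 2 * \<bar>x - y\<bar>"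
proof -
  have lipschitz: "\<bar>V (x + a) - V (y + a)\<bar> * 9999 \<le> \<bar>x - y\<bar> * 10000" for a
    using angle_value_lipschitz[of "1/10000" \<alpha> "x + a" "y + a"] by simp
  have "\<bar>V (x + a) - V (y + a)\<bar> \<le> 2 * \<bar>x - y\<bar>" for a
    using lipschitz[of a] abs_ge_zero[of "x - y"] by (smt (verit))
  from this[of \<alpha>] this[of "\<alpha> - pi/2"] show ?thesis
    unfolding next_value_def by (simp add: min_def abs_le_iff split: if_splits)
qed

lemma sin_squared_gap_sign:
  assumes "\<bar>x\<bar> < 6/5"
  shows "28/100 * x\<^sup>2 \<le> x * (2 * sin (2 * (\<nu> + \<alpha>) + x) * sin x)"
proof -
  have "\<bar>2 * (\<nu> + \<alpha>) + x - pi/2\<bar> \<le> 5/4"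
    using assms nu_gt nu_lt unfolding abs_le_iff abs_less_iff by auto
  then have "1/5 \<le> cos (2 * (\<nu> + \<alpha>) + x - pi/2)"
    by (rule cos_ge_one_fifth)
  also have "cos (2 * (\<nu> + \<alpha>) + x - pi/2) = sin (2 * (\<nu> + \<alpha>) + x)"
    by (simp add: cos_diff)
  finally have s: "1/5 \<le> sin (2 * (\<nu> + \<alpha>) + x)" .
  have "1/5 * (7/10 * x\<^sup>2) \<le> sin (2 * (\<nu> + \<alpha>) + x) * (x * sin x)"
    by (rule mult_mono[OF s x_mult_sin_ge]) (use s assms in auto)
  then show ?thesis
    by (simp add: algebra_simps)
qed

(* The radius 6/5 exceeds both alpha and pi/2 - alpha, so the estimate covers all of Iint. *)
lemma gap_sign:
  assumes "\<bar>\<theta> - \<nu>\<bar> < 6/5"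
  shows "(\<theta> - \<nu>)\<^sup>2 / 4 \<le> (\<theta> - \<nu>) * (V (\<theta> + \<alpha>) - V (\<theta> + (\<alpha> - pi/2)))"
proof -
  define x where "x = \<theta> - \<nu>"
  then have \<theta>: "\<theta> = \<nu> + x"
    by simp
  define err where "err = 1/10000 * ((next_value (\<theta> + \<alpha>) - next_value (\<nu> + \<alpha>))
      - (next_value (\<theta> + (\<alpha> - pi/2)) - next_value (\<nu> + (\<alpha> - pi/2))))"
  have gap: "V (\<theta> + \<alpha>) - V (\<theta> + (\<alpha> - pi/2)) = 2 * sin (2 * (\<nu> + \<alpha>) + x) * sin x + err"
    using V_bellman[of "\<theta> + \<alpha>"] V_bellman[of "\<theta> + (\<alpha> - pi/2)"]
      V_bellman[of "\<nu> + \<alpha>"] V_bellman[of "\<nu> + (\<alpha> - pi/2)"] balanced sin_squared_gap_diff[of \<nu> x \<alpha>]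
    unfolding err_def \<theta> by (simp add: algebra_simps)
  have "\<bar>err\<bar> \<le> 4/10000 * \<bar>x\<bar>"
    using next_value_lipschitz[of "\<theta> + \<alpha>" "\<nu> + \<alpha>"]
      next_value_lipschitz[of "\<theta> + (\<alpha> - pi/2)" "\<nu> + (\<alpha> - pi/2)"]
    unfolding err_def \<theta> by (simp add: abs_le_iff)
  then have "\<bar>x * err\<bar> \<le> \<bar>x\<bar> * (4/10000 * \<bar>x\<bar>)"
    unfolding abs_mult by (rule mult_left_mono) simp
  then have err_part: "- (4/10000 * x\<^sup>2) \<le> x * err"
    by (simp add: abs_le_iff power2_eq_square mult.left_commute abs_mult_self_eq)
  have sin_part: "28/100 * x\<^sup>2 \<le> x * (2 * sin (2 * (\<nu> + \<alpha>) + x) * sin x)"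
    using assms unfolding x_def by (rule sin_squared_gap_sign)
  have "x * (V (\<theta> + \<alpha>) - V (\<theta> + (\<alpha> - pi/2))) = x * (2 * sin (2 * (\<nu> + \<alpha>) + x) * sin x) + x * err"
    unfolding gap by (rule distrib_left)
  with err_part sin_part show ?thesis
    unfolding x_def[symmetric] using zero_le_power2[of x] by linarith
qed

lemma next_value_left:
  assumes "\<nu> - 6/5 < \<theta>" "\<theta> < \<nu>"
  shows "next_value \<theta> = V (\<theta> + \<alpha>)"
proof -
  have "0 < (\<theta> - \<nu>)\<^sup>2 / 4"
    using assms by simp
  also have "\<dots> \<le> (\<theta> - \<nu>) * (V (\<theta> + \<alpha>) - V (\<theta> + (\<alpha> - pi/2)))"
    using assms by (intro gap_sign) simp
  finally have "V (\<theta> + \<alpha>) < V (\<theta> + (\<alpha> - pi/2))"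
    using assms by (simp add: zero_less_mult_iff)
  then show ?thesis
    by (simp add: next_value_def)
qed

lemma next_value_right:
  assumes "\<nu> < \<theta>" "\<theta> < \<nu> + 6/5"
  shows "next_value \<theta> = V (\<theta> + (\<alpha> - pi/2))"
proof -
  have "0 < (\<theta> - \<nu>)\<^sup>2 / 4"
    using assms by simp
  also have "\<dots> \<le> (\<theta> - \<nu>) * (V (\<theta> + \<alpha>) - V (\<theta> + (\<alpha> - pi/2)))"
    using assms by (intro gap_sign) simp
  finally have "V (\<theta> + (\<alpha> - pi/2)) < V (\<theta> + \<alpha>)"
    using assms by (simp add: zero_less_mult_iff)
  then show ?thesis
    by (simp add: next_value_def)
qed

lemma V_differentiable_iff: "V differentiable (at x) \<longleftrightarrow> next_value differentiable (at x)"
proof -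
  have "V = (\<lambda>y. (1 + sin y ^ 2) + 1/10000 * next_value y)"
    using V_bellman by auto
  moreover have "(\<lambda>y. 1 + sin y ^ 2) differentiable (at x)"
    unfolding real_differentiable_def by (auto intro!: exI derivative_eq_intros)
  ultimately show ?thesis
    using differentiable_at_add_scaled_iff[of "1/10000"] by simp
qed

lemma next_value_not_differentiable: "\<not> next_value differentiable (at \<nu>)"
proof (rule not_differentiable_at_if_second_difference_le)
  show "eventually (\<lambda>h. next_value (\<nu> + h) + next_value (\<nu> - h) - 2 * next_value \<nu> \<le> 3 * h\<^sup>2 - 1/4 * h)
          (at_right 0)"
  proof -
    have "eventually (\<lambda>h. h \<in> {0<..<6/5}) (at_right (0::real))"
      by (rule eventually_at_right_real) simp
    then show ?thesis
    proof (rule eventually_mono)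
      fix h :: real
      assume "h \<in> {0<..<6/5}"
      then have h: "0 < h" "h < 6/5"
        by auto
      then have "h * (h / 4) \<le> h * (V (\<nu> + h + \<alpha>) - V (\<nu> + h + (\<alpha> - pi/2)))"
        using gap_sign[of "\<nu> + h"] by (simp add: power2_eq_square)
      then have "h / 4 \<le> V (\<nu> + h + \<alpha>) - V (\<nu> + h + (\<alpha> - pi/2))"
        using h(1) by (simp add: mult_le_cancel_left_pos)
      then have "next_value (\<nu> + h) \<le> V (\<nu> + \<alpha> + h) - h / 4"
        unfolding next_value_def by (simp add: min_le_iff_disj add_ac)
      moreover have "next_value (\<nu> - h) = V (\<nu> + \<alpha> - h)"
        using h by (subst next_value_left) (auto simp: algebra_simps)
      moreover have "next_value \<nu> = V (\<nu> + \<alpha>)"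
        using balanced by (simp add: next_value_def)
      moreover have "V (\<nu> + \<alpha> + h) + V (\<nu> + \<alpha> - h) - 2 * V (\<nu> + \<alpha>) \<le> 2 * h\<^sup>2 / (1 - 1/10000)"
        by (rule angle_value_second_difference_le) auto
      moreover have "2 * h\<^sup>2 / (1 - 1/10000) \<le> 3 * h\<^sup>2"
        by simp
      ultimately show "next_value (\<nu> + h) + next_value (\<nu> - h) - 2 * next_value \<nu> \<le> 3 * h\<^sup>2 - 1/4 * h"
        by linarith
    qed
  qed
qed simp

lemma V_not_differentiable: "\<not> V differentiable (at \<nu>)"
  using next_value_not_differentiable V_differentiable_iff by blast

lemma differentiable_at_Tmap:
  assumes "q \<in> Iint \<alpha> \<nu>" "q \<noteq> \<nu>" "V differentiable (at q)"
  shows "V differentiable (at (Tmap \<alpha> \<nu> q))"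
proof (cases "q < \<nu>")
  case True
  have "eventually (\<lambda>y. next_value y = V (y + \<alpha>)) (nhds q)"
    using eventually_nhds_in_open[of "{\<nu> - 6/5 <..< \<nu>}" q] assms(1) True alpha_bounds
    by (auto simp: Iint_def elim!: eventually_mono intro: next_value_left)
  then show ?thesis
    using assms(3) True
    by (simp add: V_differentiable_iff differentiable_at_cong_nhds differentiable_at_shift_iff Tmap_def)
next
  case False
  have "eventually (\<lambda>y. next_value y = V (y + (\<alpha> - pi/2))) (nhds q)"
    using eventually_nhds_in_open[of "{\<nu> <..< \<nu> + 6/5}" q] assms(1,2) False alpha_bounds
    by (auto simp: Iint_def elim!: eventually_mono intro: next_value_right)
  then show ?thesis
    using assms(3) False
    by (simp add: V_differentiable_iff differentiable_at_cong_nhds differentiable_at_shift_iff Tmap_def)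
qed

end

theorem lemma11:
  fixes \<alpha> \<nu> :: real
  assumes "pi/8 < \<alpha>" "\<alpha> < 3*pi/8"
    and "\<alpha> / pi \<notin> \<rat>"
    and "(pi/4 - \<alpha>) - 0.01 < \<nu>" "\<nu> < (pi/4 - \<alpha>) + 0.01"
    and "DeltaJtilde 0.01 \<alpha> \<nu> = 0"
  shows "\<forall>k::nat. \<not> (Jtilde 0.01 \<alpha>) differentiable (at (Tinv_iter \<alpha> \<nu> k))"
proof
  fix k :: nat
  have Jtilde: "Jtilde (1/100) \<alpha> = angle_value (1/10000) \<alpha>"
    by (simp add: Jtilde_eq_angle_value power2_eq_square)
  interpret balanced_angle \<alpha> \<nu>
    using assms by unfold_locales (simp_all add: DeltaJtilde_def Jtilde)
  have "\<not> V differentiable (at (Tinv_iter \<alpha> \<nu> k))"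
  proof (induction k)
    case 0
    then show ?case
      using V_not_differentiable by (simp add: Tinv_iter_def)
  next
    case (Suc k)
    let ?q = "Tinv_iter \<alpha> \<nu> (Suc k)"
    have "?q \<in> Iint \<alpha> \<nu>" "?q \<noteq> \<nu>"
      using alpha_bounds assms(3) by (simp_all add: Tinv_iter_in_Iint Tinv_iter_Suc_neq)
    then show ?case
      using Suc.IH differentiable_at_Tmap[of ?q] Tmap_Tinv_iter_Suc[OF alpha_bounds(1,2)] by auto
  qed
  then show "\<not> Jtilde 0.01 \<alpha> differentiable (at (Tinv_iter \<alpha> \<nu> k))"
    by (simp add: Jtilde)
qed

end
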